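(* In the setting below, $$\tau^*(K)=\langle \tau^*(q),\ \overline\varphi(\tau^*(r))\mid q\in Q,\ r\in R,\ \varphi\in\Phi^*\rangle,$$ the subgroup of $M$ generated by these elements.
   Context: Let $G=\langle S\mid Q\mid\Phi\mid R\rangle$ be given by a finite invariant $L$-presentation: $F$ is the free group on the finite set $S$, $Q,R\subseteq F$ finite, $\Phi$ a finite set of endomorphisms of $F$ with generated monoid $\Phi^*$, $K=\langle Q\cup\bigcup_{\varphi\in\Phi^*}\varphi(R)\rangle^F$, and invariance means $\varphi(K)\subseteq K$ for all $\varphi\in\Phi$. Let $n\ge3$ and $K_i:=K\gamma_i(F)$. Let $\tau^*:F\to H^*$ be an epimorphism onto a group $H^*$ with $\ker\tau^*=[K_{n-1},F]$, and let $M:=\tau^*(K_{n-1})$, a central (hence abelian) subgroup of $H^*$. For $\varphi\in\Phi^*$, $\overline\varphi$ denotes the endomorphism of $M$ with $\overline\varphi(\tau^*(k))=\tau^*(\varphi(k))$ for $k\in K_{n-1}$. *)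

theory Defs
  imports "HOL-Algebra.Algebra"
begin

definition word_eval :: "('a, 'b) monoid_scheme \<Rightarrow> ('a \<times> bool) list \<Rightarrow> 'a" where
  "word_eval G w = foldr (\<lambda>(s, e) acc. (if e then s else inv\<^bsub>G\<^esub> s) \<otimes>\<^bsub>G\<^esub> acc) w \<one>\<^bsub>G\<^esub>"

definition reduced_word :: "('a \<times> bool) list \<Rightarrow> bool" where
  "reduced_word w \<longleftrightarrow>
     (\<forall>i. Suc i < length w \<longrightarrow> \<not> (fst (w ! i) = fst (w ! Suc i) \<and> snd (w ! i) \<noteq> snd (w ! Suc i)))"

definition free_basis :: "('a, 'b) monoid_scheme \<Rightarrow> 'a set \<Rightarrow> bool" where
  "free_basis G S \<longleftrightarrow> group G \<and> S \<subseteq> carrier G \<and> generate G S = carrier G \<and>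
     (\<forall>w. set (map fst w) \<subseteq> S \<longrightarrow> reduced_word w \<longrightarrow> w \<noteq> [] \<longrightarrow> word_eval G w \<noteq> \<one>\<^bsub>G\<^esub>)"

definition comm_subgroup :: "('a, 'b) monoid_scheme \<Rightarrow> 'a set \<Rightarrow> 'a set \<Rightarrow> 'a set" where
  "comm_subgroup G A B = generate G
     {a \<otimes>\<^bsub>G\<^esub> b \<otimes>\<^bsub>G\<^esub> inv\<^bsub>G\<^esub> a \<otimes>\<^bsub>G\<^esub> inv\<^bsub>G\<^esub> b | a b. a \<in> A \<and> b \<in> B}"

fun lower_central :: "('a, 'b) monoid_scheme \<Rightarrow> nat \<Rightarrow> 'a set" where
  "lower_central G 0 = carrier G"
| "lower_central G (Suc 0) = carrier G"
| "lower_central G (Suc (Suc i)) = comm_subgroup G (lower_central G (Suc i)) (carrier G)"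

definition normal_closure :: "('a, 'b) monoid_scheme \<Rightarrow> 'a set \<Rightarrow> 'a set" where
  "normal_closure G A = generate G {g \<otimes>\<^bsub>G\<^esub> a \<otimes>\<^bsub>G\<^esub> inv\<^bsub>G\<^esub> g | g a. g \<in> carrier G \<and> a \<in> A}"

inductive_set endo_monoid :: "('a \<Rightarrow> 'a) set \<Rightarrow> ('a \<Rightarrow> 'a) set" for Phi where
  id_in: "id \<in> endo_monoid Phi"
| comp_in: "\<phi> \<in> Phi \<Longrightarrow> \<psi> \<in> endo_monoid Phi \<Longrightarrow> \<phi> \<circ> \<psi> \<in> endo_monoid Phi"

text \<open>The induced endomorphism phibar of M = tau(L), L = K_{n-1}:
  phibar(tau k) = tau(phi k) for k in L.\<close>
definition phibar :: "('a \<Rightarrow> 'h) \<Rightarrow> 'a set \<Rightarrow> ('a \<Rightarrow> 'a) \<Rightarrow> 'h \<Rightarrow> 'h" where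
  "phibar \<tau> L \<phi> m = \<tau> (\<phi> (SOME k. k \<in> L \<and> \<tau> k = m))"

end

theory Submission
  imports Defs
begin

(*
  The proof rests on two observations.
  (1) \<tau>(L) is central in H, since every commutator [x, g] with x \<in> L lies in ker \<tau>.
      Hence \<tau> maps every conjugate g x g\<^sup>-\<^sup>1 (x \<in> L) to \<tau> x, and the image of the
      normal closure K of X = Q \<union> \<Union>\<^sub>\<phi> \<phi>(R) is just the subgroup generated by \<tau>(X).
  (2) Every \<phi> in the monoid \<Phi>* is an endomorphism of F preserving K and, like every
      endomorphism, each term of the lower central series; so \<phi> preserves L and
      therefore also ker \<tau> = [L, F].  This makes phibar well defined on \<tau>(L):
      phibar(\<tau> k) = \<tau>(\<phi> k) for all k \<in> L, in particular for k = r \<in> R.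
*)

lemma comm_subgroup_carrier:
  assumes G: "group G" and A: "A \<subseteq> carrier G"
  shows "comm_subgroup G A (carrier G) \<subseteq> carrier G"
proof -
  interpret group G by (rule G)
  show ?thesis unfolding comm_subgroup_def
    by (rule generate_incl) (use A in auto)
qed

text \<open>An endomorphism mapping A into itself maps [A, G] into itself: it sends
  commutators [a, b] to commutators [h a, h b].\<close>
lemma comm_subgroup_endo_invariant:
  assumes G: "group G" and h: "h \<in> hom G G" and A: "A \<subseteq> carrier G" and hA: "h ` A \<subseteq> A"
  shows "h ` comm_subgroup G A (carrier G) \<subseteq> comm_subgroup G A (carrier G)"
proof -
  interpret group_hom G G h using G h by (simp add: group_hom_def group_hom_axioms_def)
  define C where "C = {a \<otimes>\<^bsub>G\<^esub> b \<otimes>\<^bsub>G\<^esub> inv\<^bsub>G\<^esub> a \<otimes>\<^bsub>G\<^esub> inv\<^bsub>G\<^esub> b | a b. a \<in> A \<and> b \<in> carrier G}"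
  have C_carrier: "C \<subseteq> carrier G" unfolding C_def using A by auto
  have hC: "h ` C \<subseteq> C"
  proof
    fix y assume "y \<in> h ` C"
    then obtain a b where a: "a \<in> A" and b: "b \<in> carrier G"
      and y: "y = h (a \<otimes>\<^bsub>G\<^esub> b \<otimes>\<^bsub>G\<^esub> inv\<^bsub>G\<^esub> a \<otimes>\<^bsub>G\<^esub> inv\<^bsub>G\<^esub> b)"
      unfolding C_def by blast
    have "y = h a \<otimes>\<^bsub>G\<^esub> h b \<otimes>\<^bsub>G\<^esub> inv\<^bsub>G\<^esub> h a \<otimes>\<^bsub>G\<^esub> inv\<^bsub>G\<^esub> h b"
      using y a b A by (auto simp: hom_inv)
    moreover have "h a \<in> A" "h b \<in> carrier G" using hA a b by auto
    ultimately show "y \<in> C" unfolding C_def by blast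
  qed
  have "h ` generate G C = generate G (h ` C)" using generate_img[OF C_carrier] by simp
  also have "\<dots> \<subseteq> generate G C" using hC by (rule G.mono_generate)
  finally show ?thesis unfolding comm_subgroup_def C_def .
qed

lemma lower_central_carrier: "group G \<Longrightarrow> lower_central G m \<subseteq> carrier G"
proof (induction G m rule: lower_central.induct)
  case (3 G i)
  then show ?case using comm_subgroup_carrier[OF 3(2) 3(1)[OF 3(2)]] by simp
qed auto

lemma lower_central_one:
  assumes G: "group G" shows "\<one>\<^bsub>G\<^esub> \<in> lower_central G m"
proof (cases m)
  case (Suc k)
  then show ?thesis
    by (cases k) (simp_all add: group.is_monoid[OF G] monoid.one_closed comm_subgroup_def generate.one)
qed (simp add: group.is_monoid[OF G] monoid.one_closed)

lemma lower_central_endo_invariant: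
  "group G \<Longrightarrow> h \<in> hom G G \<Longrightarrow> h ` lower_central G m \<subseteq> lower_central G m"
proof (induction G m rule: lower_central.induct)
  case (3 G i)
  then show ?case
    using comm_subgroup_endo_invariant[OF 3(2,3) lower_central_carrier[OF 3(2)] 3(1)[OF 3(2,3)]]
    by simp
qed (auto simp: hom_def)

lemma set_mult_endo_invariant:
  assumes h: "h \<in> hom G G" and A: "A \<subseteq> carrier G" and B: "B \<subseteq> carrier G"
    and hA: "h ` A \<subseteq> A" and hB: "h ` B \<subseteq> B"
  shows "h ` (A <#>\<^bsub>G\<^esub> B) \<subseteq> A <#>\<^bsub>G\<^esub> B"
proof
  fix y assume "y \<in> h ` (A <#>\<^bsub>G\<^esub> B)"
  then obtain a b where a: "a \<in> A" and b: "b \<in> B" and y: "y = h (a \<otimes>\<^bsub>G\<^esub> b)"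
    unfolding set_mult_def by blast
  have "y = h a \<otimes>\<^bsub>G\<^esub> h b" using y a b A B hom_mult[OF h] by auto
  moreover have "h a \<in> A" "h b \<in> B" using a b hA hB by auto
  ultimately show "y \<in> A <#>\<^bsub>G\<^esub> B" unfolding set_mult_def by blast
qed

lemma subset_set_mult_one:
  assumes "monoid G" and "A \<subseteq> carrier G" and "\<one>\<^bsub>G\<^esub> \<in> B"
  shows "A \<subseteq> A <#>\<^bsub>G\<^esub> B"
proof
  fix a assume a: "a \<in> A"
  then have "a = a \<otimes>\<^bsub>G\<^esub> \<one>\<^bsub>G\<^esub>" using assms(1,2) monoid.r_one by fastforce
  then show "a \<in> A <#>\<^bsub>G\<^esub> B" unfolding set_mult_def using a assms(3) by blast
qed

lemma endo_monoid_hom_invariant: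
  assumes "\<psi> \<in> endo_monoid Phi" "\<forall>\<phi>\<in>Phi. \<phi> \<in> hom F F" "\<forall>\<phi>\<in>Phi. \<phi> ` K \<subseteq> K"
  shows "\<psi> \<in> hom F F \<and> \<psi> ` K \<subseteq> K"
  using assms(1)
proof induction
  case id_in then show ?case by (auto simp: hom_def)
next
  case (comp_in \<phi> \<psi>)
  then show ?case using assms(2,3) hom_compose[of \<psi> F F \<phi> F]
    by (auto simp: image_comp[symmetric] o_def) blast+
qed

text \<open>If ker \<tau> = [K gamma_m(G), G], then every endomorphism preserving K preserves
  ker \<tau>: it preserves K, the fully invariant gamma_m(G), their product, and hence the
  commutator subgroup.\<close>
lemma kernel_endo_invariant:
  assumes G: "group G" and \<phi>: "\<phi> \<in> hom G G" and K: "K \<subseteq> carrier G" and \<phi>K: "\<phi> ` K \<subseteq> K"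
    and ker: "kernel G H \<tau> = comm_subgroup G (K <#>\<^bsub>G\<^esub> lower_central G m) (carrier G)"
  shows "\<phi> ` kernel G H \<tau> \<subseteq> kernel G H \<tau>"
proof -
  have \<gamma>: "lower_central G m \<subseteq> carrier G" by (rule lower_central_carrier[OF G])
  have "K <#>\<^bsub>G\<^esub> lower_central G m \<subseteq> carrier G" unfolding set_mult_def
    using K \<gamma> by (auto intro: monoid.m_closed[OF group.is_monoid[OF G]])
  moreover have "\<phi> ` (K <#>\<^bsub>G\<^esub> lower_central G m) \<subseteq> K <#>\<^bsub>G\<^esub> lower_central G m"
    by (rule set_mult_endo_invariant[OF \<phi> K \<gamma> \<phi>K lower_central_endo_invariant[OF G \<phi>]])
  ultimately show ?thesis unfolding ker by (rule comm_subgroup_endo_invariant[OF G \<phi>])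
qed

lemma commute_of_commutator_one:
  assumes H: "group H" and a: "a \<in> carrier H" and b: "b \<in> carrier H"
    and e: "a \<otimes>\<^bsub>H\<^esub> b \<otimes>\<^bsub>H\<^esub> inv\<^bsub>H\<^esub> a \<otimes>\<^bsub>H\<^esub> inv\<^bsub>H\<^esub> b = \<one>\<^bsub>H\<^esub>"
  shows "b \<otimes>\<^bsub>H\<^esub> a \<otimes>\<^bsub>H\<^esub> inv\<^bsub>H\<^esub> b = a"
proof -
  interpret group H by (rule H)
  have "(a \<otimes>\<^bsub>H\<^esub> b \<otimes>\<^bsub>H\<^esub> inv\<^bsub>H\<^esub> a \<otimes>\<^bsub>H\<^esub> inv\<^bsub>H\<^esub> b) \<otimes>\<^bsub>H\<^esub> (b \<otimes>\<^bsub>H\<^esub> a) = a \<otimes>\<^bsub>H\<^esub> b"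
    using a b by (simp add: m_assoc flip: m_assoc[of "inv\<^bsub>H\<^esub> b" b a])
  then have ab: "a \<otimes>\<^bsub>H\<^esub> b = b \<otimes>\<^bsub>H\<^esub> a" using e a b by simp
  have "b \<otimes>\<^bsub>H\<^esub> a \<otimes>\<^bsub>H\<^esub> inv\<^bsub>H\<^esub> b = a \<otimes>\<^bsub>H\<^esub> b \<otimes>\<^bsub>H\<^esub> inv\<^bsub>H\<^esub> b" using ab by simp
  also have "\<dots> = a" using a b by (simp add: m_assoc)
  finally show ?thesis .
qed

lemma image_central_mod_kernel:
  assumes G: "group G" and H: "group H" and \<tau>: "\<tau> \<in> hom G H" and L: "L \<subseteq> carrier G"
    and ker: "comm_subgroup G L (carrier G) \<subseteq> kernel G H \<tau>"
    and x: "x \<in> L" and g: "g \<in> carrier G"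
  shows "\<tau> g \<otimes>\<^bsub>H\<^esub> \<tau> x \<otimes>\<^bsub>H\<^esub> inv\<^bsub>H\<^esub> \<tau> g = \<tau> x"
proof -
  interpret group_hom G H \<tau> using G H \<tau> by (simp add: group_hom_def group_hom_axioms_def)
  have xG: "x \<in> carrier G" using x L by auto
  have "x \<otimes>\<^bsub>G\<^esub> g \<otimes>\<^bsub>G\<^esub> inv\<^bsub>G\<^esub> x \<otimes>\<^bsub>G\<^esub> inv\<^bsub>G\<^esub> g \<in> comm_subgroup G L (carrier G)"
    unfolding comm_subgroup_def using x g by (blast intro: generate.incl)
  then have "\<tau> (x \<otimes>\<^bsub>G\<^esub> g \<otimes>\<^bsub>G\<^esub> inv\<^bsub>G\<^esub> x \<otimes>\<^bsub>G\<^esub> inv\<^bsub>G\<^esub> g) = \<one>\<^bsub>H\<^esub>"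
    using ker by (auto simp: kernel_def)
  then have "\<tau> x \<otimes>\<^bsub>H\<^esub> \<tau> g \<otimes>\<^bsub>H\<^esub> inv\<^bsub>H\<^esub> \<tau> x \<otimes>\<^bsub>H\<^esub> inv\<^bsub>H\<^esub> \<tau> g = \<one>\<^bsub>H\<^esub>"
    using xG g by simp
  then show ?thesis using commute_of_commutator_one[OF H] xG g by simp
qed

lemma normal_closure_carrier:
  assumes G: "group G" and A: "A \<subseteq> carrier G"
  shows "normal_closure G A \<subseteq> carrier G"
proof -
  interpret group G by (rule G)
  show ?thesis unfolding normal_closure_def
    by (rule generate_incl) (use A in auto)
qed

lemma subset_normal_closure:
  assumes G: "group G" and A: "A \<subseteq> carrier G"
  shows "A \<subseteq> normal_closure G A"
proof
  interpret group G by (rule G)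
  fix a assume a: "a \<in> A"
  then have "\<one>\<^bsub>G\<^esub> \<otimes>\<^bsub>G\<^esub> a \<otimes>\<^bsub>G\<^esub> inv\<^bsub>G\<^esub> \<one>\<^bsub>G\<^esub> = a" using A by auto
  moreover have "\<one>\<^bsub>G\<^esub> \<in> carrier G" by simp
  ultimately show "a \<in> normal_closure G A"
    unfolding normal_closure_def using a by (metis (mono_tags, lifting) generate.incl mem_Collect_eq)
qed

text \<open>If the images of the generators A are fixed by conjugation in H, then the
  image of the normal closure of A is generated by the image of A: each conjugate
  g a g^-1 of a generator a has the same image as a.\<close>
lemma image_normal_closure_central:
  assumes G: "group G" and H: "group H" and \<tau>: "\<tau> \<in> hom G H" and A: "A \<subseteq> carrier G"
    and central: "\<And>a g. a \<in> A \<Longrightarrow> g \<in> carrier G \<Longrightarrow> \<tau> g \<otimes>\<^bsub>H\<^esub> \<tau> a \<otimes>\<^bsub>H\<^esub> inv\<^bsub>H\<^esub> \<tau> g = \<tau> a"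
  shows "\<tau> ` normal_closure G A = generate H (\<tau> ` A)"
proof -
  interpret group_hom G H \<tau> using G H \<tau> by (simp add: group_hom_def group_hom_axioms_def)
  define C where "C = {g \<otimes>\<^bsub>G\<^esub> a \<otimes>\<^bsub>G\<^esub> inv\<^bsub>G\<^esub> g | g a. g \<in> carrier G \<and> a \<in> A}"
  have C_carrier: "C \<subseteq> carrier G" unfolding C_def using A by auto
  have "\<tau> ` C \<subseteq> \<tau> ` A"
  proof
    fix y assume "y \<in> \<tau> ` C"
    then obtain g a where g: "g \<in> carrier G" and a: "a \<in> A"
      and y: "y = \<tau> (g \<otimes>\<^bsub>G\<^esub> a \<otimes>\<^bsub>G\<^esub> inv\<^bsub>G\<^esub> g)"
      unfolding C_def by blast
    have "y = \<tau> g \<otimes>\<^bsub>H\<^esub> \<tau> a \<otimes>\<^bsub>H\<^esub> inv\<^bsub>H\<^esub> \<tau> g" using y g a A by auto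
    then show "y \<in> \<tau> ` A" using central[OF a g] a by simp
  qed
  moreover have "A \<subseteq> C"
  proof
    fix a assume a: "a \<in> A"
    then have "\<one>\<^bsub>G\<^esub> \<otimes>\<^bsub>G\<^esub> a \<otimes>\<^bsub>G\<^esub> inv\<^bsub>G\<^esub> \<one>\<^bsub>G\<^esub> = a" using A by auto
    then show "a \<in> C" unfolding C_def using a by force
  qed
  ultimately have "\<tau> ` C = \<tau> ` A" by blast
  then show ?thesis
    unfolding normal_closure_def C_def[symmetric] using generate_img[OF C_carrier] by simp
qed

text \<open>If the endomorphism \<phi> preserves ker \<tau>, then phibar is independent of the
  chosen preimage: phibar(\<tau> k) = \<tau>(\<phi> k) for every k \<in> L.\<close>
lemma phibar_image:
  assumes G: "group G" and H: "group H" and \<tau>: "\<tau> \<in> hom G H" and L: "L \<subseteq> carrier G"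
    and \<phi>: "\<phi> \<in> hom G G" and \<phi>_ker: "\<phi> ` kernel G H \<tau> \<subseteq> kernel G H \<tau>" and k: "k \<in> L"
  shows "phibar \<tau> L \<phi> (\<tau> k) = \<tau> (\<phi> k)"
proof -
  interpret group_hom G H \<tau> using G H \<tau> by (simp add: group_hom_def group_hom_axioms_def)
  define k' where "k' = (SOME k'. k' \<in> L \<and> \<tau> k' = \<tau> k)"
  have "k' \<in> L \<and> \<tau> k' = \<tau> k" unfolding k'_def by (rule someI[of _ k]) (use k in simp)
  then have k'L: "k' \<in> L" and \<tau>k': "\<tau> k' = \<tau> k" by auto
  have kG: "k \<in> carrier G" and k'G: "k' \<in> carrier G" using k k'L L by auto
  define c where "c = inv\<^bsub>G\<^esub> k \<otimes>\<^bsub>G\<^esub> k'"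
  have cG: "c \<in> carrier G" unfolding c_def using kG k'G by simp
  have "c \<in> kernel G H \<tau>" unfolding c_def kernel_def using kG k'G \<tau>k' by simp
  then have \<tau>\<phi>c: "\<tau> (\<phi> c) = \<one>\<^bsub>H\<^esub>" using \<phi>_ker by (auto simp: kernel_def)
  have "k' = k \<otimes>\<^bsub>G\<^esub> c" unfolding c_def using kG k'G by (simp add: G.m_assoc[symmetric])
  then have "\<phi> k' = \<phi> k \<otimes>\<^bsub>G\<^esub> \<phi> c" using Group.hom_mult[OF \<phi>] kG cG by simp
  moreover have "\<phi> k \<in> carrier G" "\<phi> c \<in> carrier G" using \<phi> kG cG by (auto simp: hom_def Pi_def)
  ultimately have "\<tau> (\<phi> k') = \<tau> (\<phi> k)" using \<tau>\<phi>c by simp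
  then show ?thesis unfolding phibar_def k'_def[symmetric] .
qed

theorem mainTheorem7:
  fixes F :: "'f monoid" and H :: "'h monoid"
    and S Q R :: "'f set" and Phi :: "('f \<Rightarrow> 'f) set"
    and K :: "'f set" and n :: nat and \<tau> :: "'f \<Rightarrow> 'h"
  assumes free: "free_basis F S" and finS: "finite S"
    and finQ: "finite Q" and QF: "Q \<subseteq> carrier F"
    and finR: "finite R" and RF: "R \<subseteq> carrier F"
    and finPhi: "finite Phi" and endo: "\<forall>\<phi>\<in>Phi. \<phi> \<in> hom F F"
    and K_def: "K = normal_closure F (Q \<union> (\<Union>\<phi>\<in>endo_monoid Phi. \<phi> ` R))"
    and invariant: "\<forall>\<phi>\<in>Phi. \<phi> ` K \<subseteq> K"
    and n3: "n \<ge> 3"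
    and H: "group H"
    and tau_hom: "\<tau> \<in> hom F H" and tau_onto: "\<tau> ` carrier F = carrier H"
    and tau_ker: "kernel F H \<tau> = comm_subgroup F (K <#>\<^bsub>F\<^esub> lower_central F (n - 1)) (carrier F)"
  shows "\<tau> ` K = generate H (\<tau> ` Q \<union>
           {phibar \<tau> (K <#>\<^bsub>F\<^esub> lower_central F (n - 1)) \<phi> (\<tau> r) | \<phi> r. \<phi> \<in> endo_monoid Phi \<and> r \<in> R})"
proof -
  have F: "group F" using free by (simp add: free_basis_def)
  define Gens where "Gens = Q \<union> (\<Union>\<phi>\<in>endo_monoid Phi. \<phi> ` R)"
  define L where "L = K <#>\<^bsub>F\<^esub> lower_central F (n - 1)"
  have em: "\<phi> \<in> hom F F \<and> \<phi> ` K \<subseteq> K" if "\<phi> \<in> endo_monoid Phi" for \<phi>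
    using endo_monoid_hom_invariant that endo invariant by blast
  have GensF: "Gens \<subseteq> carrier F" unfolding Gens_def using QF RF em by (auto simp: hom_def Pi_def)
  have KF: "K \<subseteq> carrier F" unfolding K_def Gens_def[symmetric]
    by (rule normal_closure_carrier[OF F GensF])
  have \<gamma>F: "lower_central F (n - 1) \<subseteq> carrier F" by (rule lower_central_carrier[OF F])
  have LF: "L \<subseteq> carrier F" unfolding L_def set_mult_def
    using KF \<gamma>F by (auto intro: monoid.m_closed[OF group.is_monoid[OF F]])
  have GensL: "Gens \<subseteq> L" unfolding L_def
    using subset_normal_closure[OF F GensF] subset_set_mult_one[OF group.is_monoid[OF F] KF
          lower_central_one[OF F]] K_def Gens_def by blast
  \<comment> \<open>(1) \<tau>(L) is central, so \<tau>(K) is generated by \<tau>(Gens).\<close>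
  have image_K: "\<tau> ` K = generate H (\<tau> ` Gens)" unfolding K_def Gens_def[symmetric]
    using image_normal_closure_central[OF F H tau_hom GensF] image_central_mod_kernel[OF F H tau_hom LF]
      tau_ker GensL unfolding L_def by blast
  \<comment> \<open>(2) Each \<phi> \<in> \<Phi>* preserves L, hence ker \<tau> = [L, F], hence phibar(\<tau> r) = \<tau>(\<phi> r).\<close>
  have phibar_R: "phibar \<tau> L \<phi> (\<tau> r) = \<tau> (\<phi> r)" if \<phi>: "\<phi> \<in> endo_monoid Phi" and r: "r \<in> R" for \<phi> r
  proof (rule phibar_image[OF F H tau_hom LF])
    show \<phi>F: "\<phi> \<in> hom F F" using em[OF \<phi>] by blast
    show "\<phi> ` kernel F H \<tau> \<subseteq> kernel F H \<tau>"
      using kernel_endo_invariant[OF F \<phi>F KF _ tau_ker] em[OF \<phi>] by blast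
    show "r \<in> L" using GensL r endo_monoid.id_in[of Phi] unfolding Gens_def by force
  qed
  have "{phibar \<tau> L \<phi> (\<tau> r) | \<phi> r. \<phi> \<in> endo_monoid Phi \<and> r \<in> R}
               = {\<tau> (\<phi> r) | \<phi> r. \<phi> \<in> endo_monoid Phi \<and> r \<in> R}" using phibar_R by metis
  also have "\<dots> = \<tau> ` (\<Union>\<phi>\<in>endo_monoid Phi. \<phi> ` R)" by blast
  finally show ?thesis using image_K unfolding Gens_def L_def[symmetric] by (simp add: image_Un)
qed

end
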